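(* Let $N\ge2$, let $\Omega$ be an $N\times N$ nonnegative matrix with zero diagonal and positive row sums $k_i=\sum_j\Omega_{ij}$ whose associated directed graph (edge $i\to j$ iff $\Omega_{ij}>0$) is strongly connected, and let $\mathcal L_{ij}=\delta_{ij}-\Omega_{ij}/k_i$. Let $\nu$ be a nonzero Borel measure on $(0,\infty)$ with $\int_0^\infty\min\{1,\tau\}\,\nu(d\tau)<\infty$. Then the matrix integral $$g(\mathcal L)=\int_0^\infty\big(\mathbf 1-e^{-\tau\mathcal L}\big)\,\nu(d\tau)$$ converges entrywise and satisfies: (i) $\sum_{j=1}^N g(\mathcal L)_{ij}=0$ for every $i$; (ii) $g(\mathcal L)_{ii}>0$ for every $i$; (iii) $g(\mathcal L)_{ij}<0$ for all $i\neq j$. Consequently the matrix $W^{(g)}_{ij}=\delta_{ij}-g(\mathcal L)_{ij}/g(\mathcal L)_{ii}$ is row-stochastic with $W^{(g)}_{ii}=0$ and $W^{(g)}_{ij}>0$ for all $i\ne j$.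
   Context: $\mathbf 1$ denotes the identity matrix, $\delta_{ij}$ the Kronecker delta. The scalar function $g(\mu)=\int_0^\infty(1-e^{-\tau\mu})\nu(d\tau)$ is a Bernstein function with $g(0)=0$. *)

theory Defs
  imports "HOL-Analysis.Analysis"
begin

primrec matpow :: "real^'n^'n \<Rightarrow> nat \<Rightarrow> real^'n^'n" where
  "matpow A 0 = mat 1"
| "matpow A (Suc k) = A ** matpow A k"

definition mexp :: "real^'n^'n \<Rightarrow> real^'n^'n" where
  "mexp A = (\<chi> i j. \<Sum>k. (matpow A k $ i $ j) / fact k)"

definition rw_laplacian :: "real^'n^'n \<Rightarrow> real^'n^'n" where
  "rw_laplacian Om = (\<chi> i j. (if i = j then 1 else 0) - Om $ i $ j / (\<Sum>l\<in>UNIV. Om $ i $ l))"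

definition strongly_connected_mat :: "real^'n^'n \<Rightarrow> bool" where
  "strongly_connected_mat Om \<longleftrightarrow> (\<forall>i j. (i, j) \<in> {(a, b). Om $ a $ b > 0}\<^sup>*)"

end

theory Submission
  imports Defs
begin

text \<open>
  Write the Laplacian as \<open>mat 1 - P\<close> with the row-stochastic transition matrix
  \<open>P = \<Omega>/k\<close>. Then \<open>exp(-\<tau>(mat 1 - P)) = exp(-\<tau>) exp(\<tau> P)\<close> is again row-stochastic,
  its diagonal is at least \<open>exp(-\<tau>)\<close> (the zeroth term of the series), and its off-diagonal
  entries are positive for \<open>\<tau> > 0\<close>, because strong connectivity makes some power of \<open>P\<close>
  positive at every position. Hence each entry of \<open>mat 1 - exp(-\<tau>(mat 1 - P))\<close> is bounded
  by \<open>1 - exp(-\<tau>) \<le> min 1 \<tau>\<close>, which gives integrability against \<open>\<nu>\<close>; the rows of the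
  integrand sum to zero and its off-diagonal entries are negative on \<open>(0,\<infinity>)\<close>, where \<open>\<nu>\<close>
  lives. Integrating preserves both facts, and since every row has an off-diagonal entry
  (\<open>N \<ge> 2\<close>), the diagonal of the integral is positive.
\<close>

lemma matrix_matrix_mult_entry: "(A ** B) $ i $ j = (\<Sum>l\<in>UNIV. A $ i $ l * B $ l $ j)"
  by (simp add: matrix_matrix_mult_def)

lemma mat_1_entry: "mat 1 $ i $ j = (if i = j then 1 else 0)"
  by (simp add: mat_def)

lemma matpow_scaleR_entry: "matpow (c *\<^sub>R X) m $ i $ j = c ^ m * matpow X m $ i $ j"
proof (induction m arbitrary: i j)
  case 0
  show ?case by simp
next
  case (Suc m)
  show ?case by (simp add: matrix_matrix_mult_entry Suc sum_distrib_left mult_ac)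
qed

lemma binomial_sum_Suc:
  fixes x :: "nat \<Rightarrow> real"
  shows "(\<Sum>m\<le>Suc k. real (Suc k choose m) * c ^ (Suc k - m) * x m)
       = (\<Sum>m\<le>k. real (k choose m) * c ^ (k - m) * x (Suc m))
         + c * (\<Sum>m\<le>k. real (k choose m) * c ^ (k - m) * x m)"
proof -
  let ?S = "\<Sum>m\<le>Suc k. real (k choose m) * c ^ (Suc k - m) * x m"
  have pascal: "(\<Sum>m\<le>Suc k. real (Suc k choose m) * c ^ (Suc k - m) * x m)
      = c ^ Suc k * x 0 + (\<Sum>m\<le>k. real (k choose m) * c ^ (k - m) * x (Suc m))
        + (\<Sum>m\<le>k. real (k choose Suc m) * c ^ (k - m) * x (Suc m))"
    by (simp add: sum.atMost_Suc_shift sum.distrib algebra_simps del: sum.atMost_Suc)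
  have shifted: "?S = c ^ Suc k * x 0 + (\<Sum>m\<le>k. real (k choose Suc m) * c ^ (k - m) * x (Suc m))"
    by (simp add: sum.atMost_Suc_shift del: sum.atMost_Suc)
  have "?S = (\<Sum>m\<le>k. real (k choose m) * c ^ (Suc k - m) * x m)"
    by simp
  also have "\<dots> = (\<Sum>m\<le>k. c * (real (k choose m) * c ^ (k - m) * x m))"
    by (rule sum.cong) (auto simp: Suc_diff_le)
  finally have "?S = c * (\<Sum>m\<le>k. real (k choose m) * c ^ (k - m) * x m)"
    by (simp add: sum_distrib_left)
  with pascal shifted show ?thesis by simp
qed

lemma matpow_add_scaleR_mat1_entry:
  "matpow (X + c *\<^sub>R mat 1) k $ i $ j
     = (\<Sum>m\<le>k. real (k choose m) * c ^ (k - m) * matpow X m $ i $ j)"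
proof (induction k arbitrary: i j)
  case 0
  show ?case by simp
next
  case (Suc k)
  let ?Y = "matpow (X + c *\<^sub>R mat 1) k"
  have step: "matpow (X + c *\<^sub>R mat 1) (Suc k) $ i $ j
      = (\<Sum>l\<in>UNIV. X $ i $ l * ?Y $ l $ j) + c * ?Y $ i $ j"
  proof -
    have "(X + c *\<^sub>R mat 1) $ i $ l * ?Y $ l $ j
        = X $ i $ l * ?Y $ l $ j + (if i = l then c * ?Y $ l $ j else 0)" for l
      by (simp add: mat_def distrib_right)
    then show ?thesis
      by (simp add: matrix_matrix_mult_entry sum.distrib)
  qed
  have "(\<Sum>l\<in>UNIV. X $ i $ l * (\<Sum>m\<le>k. real (k choose m) * c ^ (k - m) * matpow X m $ l $ j))
      = (\<Sum>m\<le>k. real (k choose m) * c ^ (k - m) * matpow X (Suc m) $ i $ j)"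
    unfolding sum_distrib_left matrix_matrix_mult_entry matpow.simps
    by (subst sum.swap) (simp add: mult_ac)
  then show ?case
    unfolding step Suc binomial_sum_Suc[where x = "\<lambda>m. matpow X m $ i $ j"] by simp
qed

definition stochastic_mat :: "real^'n^'n \<Rightarrow> bool" where
  "stochastic_mat P \<longleftrightarrow> (\<forall>i j. 0 \<le> P $ i $ j) \<and> (\<forall>i. (\<Sum>j\<in>UNIV. P $ i $ j) = 1)"

lemma matpow_nonneg:
  assumes "\<forall>i j. 0 \<le> P $ i $ j"
  shows "0 \<le> matpow P m $ i $ j"
proof (induction m arbitrary: i j)
  case 0
  show ?case by (simp add: mat_def)
next
  case (Suc m)
  show ?case using assms Suc by (simp add: matrix_matrix_mult_entry sum_nonneg)
qed

lemma matpow_row_sum: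
  assumes "\<forall>i. (\<Sum>j\<in>UNIV. P $ i $ j) = 1"
  shows "(\<Sum>j\<in>UNIV. matpow P m $ i $ j) = 1"
proof (induction m arbitrary: i)
  case 0
  show ?case by (simp add: mat_def)
next
  case (Suc m)
  have "(\<Sum>j\<in>UNIV. matpow P (Suc m) $ i $ j)
      = (\<Sum>l\<in>UNIV. P $ i $ l * (\<Sum>j\<in>UNIV. matpow P m $ l $ j))"
    unfolding matpow.simps matrix_matrix_mult_entry sum_distrib_left by (rule sum.swap)
  also have "\<dots> = 1"
    using Suc assms by simp
  finally show ?case .
qed

lemma matpow_le_1:
  assumes "stochastic_mat P"
  shows "matpow P m $ i $ j \<le> 1"
proof -
  have "matpow P m $ i $ j \<le> (\<Sum>j\<in>UNIV. matpow P m $ i $ j)"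
    using assms by (intro member_le_sum) (auto simp: stochastic_mat_def matpow_nonneg)
  then show ?thesis
    using assms by (simp add: stochastic_mat_def matpow_row_sum)
qed

lemma matpow_pos_if_rtrancl:
  assumes nonneg: "\<forall>i j. 0 \<le> P $ i $ j"
    and "(a, b) \<in> {(x, y). 0 < P $ x $ y}\<^sup>*"
  shows "\<exists>m. 0 < matpow P m $ a $ b"
  using assms(2)
proof (induction rule: converse_rtrancl_induct)
  case base
  show ?case by (intro exI[of _ 0]) (simp add: mat_def)
next
  case (step y z)
  then obtain m where m: "0 < matpow P m $ z $ b" by auto
  have "P $ y $ z * matpow P m $ z $ b \<le> (\<Sum>l\<in>UNIV. P $ y $ l * matpow P m $ l $ b)"
    using nonneg by (intro member_le_sum) (auto simp: matpow_nonneg)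
  moreover have "0 < P $ y $ z * matpow P m $ z $ b"
    using step(1) m by simp
  ultimately show ?case
    by (intro exI[of _ "Suc m"]) (simp add: matrix_matrix_mult_entry)
qed

lemma mexp_scaleR_entry:
  "mexp (t *\<^sub>R P) $ i $ j = (\<Sum>m. t ^ m * matpow P m $ i $ j / fact m)"
  by (simp add: mexp_def matpow_scaleR_entry)

lemma summable_norm_mexp_stochastic:
  assumes "stochastic_mat P"
  shows "summable (\<lambda>m. norm (t ^ m * matpow P m $ i $ j / fact m))"
proof (rule summable_comparison_test[OF _ summable_exp[of "\<bar>t\<bar>"]])
  have "\<bar>matpow P n $ i $ j\<bar> \<le> 1" for n
    using assms matpow_le_1[OF assms] by (simp add: stochastic_mat_def matpow_nonneg)
  then have "\<bar>t\<bar> ^ n * \<bar>matpow P n $ i $ j\<bar> \<le> \<bar>t\<bar> ^ n" for n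
    by (simp add: mult_left_le)
  then show "\<exists>N. \<forall>n\<ge>N. norm (norm (t ^ n * matpow P n $ i $ j / fact n)) \<le> inverse (fact n) * \<bar>t\<bar> ^ n"
    by (simp add: abs_mult power_abs divide_inverse mult_ac mult_left_mono)
qed

lemma summable_mexp_stochastic:
  "stochastic_mat P \<Longrightarrow> summable (\<lambda>m. t ^ m * matpow P m $ i $ j / fact m)"
  by (rule summable_norm_cancel[OF summable_norm_mexp_stochastic])

lemma mexp_add_scaleR_mat1_entry:
  assumes "stochastic_mat P"
  shows "mexp (t *\<^sub>R P + c *\<^sub>R mat 1) $ i $ j = exp c * mexp (t *\<^sub>R P) $ i $ j"
proof -
  define a where "a m = t ^ m * matpow P m $ i $ j / fact m" for m
  define b where "b n = c ^ n / fact n" for n :: nat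
  have "matpow (t *\<^sub>R P + c *\<^sub>R mat 1) k $ i $ j / fact k = (\<Sum>m\<le>k. a m * b (k - m))" for k
  proof -
    have "matpow (t *\<^sub>R P + c *\<^sub>R mat 1) k $ i $ j / fact k
        = (\<Sum>m\<le>k. real (k choose m) * c ^ (k - m) * (t ^ m * matpow P m $ i $ j) / fact k)"
      by (simp add: matpow_add_scaleR_mat1_entry matpow_scaleR_entry sum_divide_distrib)
    also have "\<dots> = (\<Sum>m\<le>k. a m * b (k - m))"
      by (intro sum.cong refl) (simp add: a_def b_def binomial_fact field_simps)
    finally show ?thesis .
  qed
  moreover have "summable (\<lambda>n. norm (b n))"
    using summable_exp[of "\<bar>c\<bar>"] by (simp add: b_def abs_mult power_abs divide_inverse mult_ac)
  moreover have "(\<Sum>n. b n) = exp c"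
    using exp_converges[of c] by (simp add: b_def sums_iff divide_inverse mult_ac)
  ultimately have "(\<lambda>k. matpow (t *\<^sub>R P + c *\<^sub>R mat 1) k $ i $ j / fact k)
      sums (exp c * (\<Sum>m. a m))"
    using Cauchy_product_sums[OF summable_norm_mexp_stochastic[OF assms], of b t i j]
    by (simp add: a_def mult.commute)
  then show ?thesis
    unfolding mexp_scaleR_entry by (simp add: mexp_def a_def sums_iff)
qed

lemma mexp_stochastic_row_sum:
  assumes "stochastic_mat P"
  shows "(\<Sum>j\<in>UNIV. mexp (t *\<^sub>R P) $ i $ j) = exp t"
proof -
  have "(\<Sum>j\<in>UNIV. mexp (t *\<^sub>R P) $ i $ j) = (\<Sum>m. \<Sum>j\<in>UNIV. t ^ m * matpow P m $ i $ j / fact m)"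
    unfolding mexp_scaleR_entry
    by (rule suminf_sum[symmetric]) (rule summable_mexp_stochastic[OF assms])
  also have "\<dots> = (\<Sum>m. t ^ m / fact m)"
    using assms by (simp add: stochastic_mat_def sum_divide_distrib[symmetric]
        sum_distrib_left[symmetric] matpow_row_sum)
  also have "\<dots> = exp t"
    using exp_converges[of t] by (simp add: sums_iff divide_inverse mult_ac)
  finally show ?thesis .
qed

lemma mexp_stochastic_term_le:
  assumes "stochastic_mat P" and "0 \<le> t"
  shows "t ^ m * matpow P m $ i $ j / fact m \<le> mexp (t *\<^sub>R P) $ i $ j"
proof -
  have "(\<Sum>n\<in>{m}. t ^ n * matpow P n $ i $ j / fact n) \<le> (\<Sum>n. t ^ n * matpow P n $ i $ j / fact n)"
    using assms by (intro sum_le_suminf summable_mexp_stochastic) (auto simp: stochastic_mat_def matpow_nonneg)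
  then show ?thesis
    by (simp add: mexp_scaleR_entry)
qed

lemma mexp_stochastic_ge_mat1:
  assumes "stochastic_mat P" and "0 \<le> t"
  shows "mat 1 $ i $ j \<le> mexp (t *\<^sub>R P) $ i $ j"
  using mexp_stochastic_term_le[OF assms, of 0] by simp

lemma mexp_stochastic_nonneg:
  assumes "stochastic_mat P" and "0 \<le> t"
  shows "0 \<le> mexp (t *\<^sub>R P) $ i $ j"
  using mexp_stochastic_ge_mat1[OF assms, of i j] by (simp add: mat_1_entry split: if_splits)

lemma borel_measurable_mexp_stochastic:
  assumes "stochastic_mat P"
  shows "(\<lambda>t. mexp (t *\<^sub>R P) $ i $ j) \<in> borel_measurable borel"
  unfolding mexp_scaleR_entry
proof (rule borel_measurable_LIMSEQ_real)
  show "(\<lambda>t. \<Sum>m<n. t ^ m * matpow P m $ i $ j / fact m) \<in> borel_measurable borel" for n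
    by measurable
  show "(\<lambda>n. \<Sum>m<n. t ^ m * matpow P m $ i $ j / fact m) \<longlonglongrightarrow> (\<Sum>m. t ^ m * matpow P m $ i $ j / fact m)"
    for t :: real
    by (rule summable_LIMSEQ[OF summable_mexp_stochastic[OF assms]])
qed

definition rw_transition :: "real^'n^'n \<Rightarrow> real^'n^'n" where
  "rw_transition Om = (\<chi> i j. Om $ i $ j / (\<Sum>l\<in>UNIV. Om $ i $ l))"

lemma stochastic_rw_transition:
  assumes "\<forall>i j. 0 \<le> Om $ i $ j" and "\<forall>i. 0 < (\<Sum>j\<in>UNIV. Om $ i $ j)"
  shows "stochastic_mat (rw_transition Om)"
  using assms unfolding stochastic_mat_def rw_transition_def
  by (auto simp: sum_divide_distrib[symmetric] intro!: divide_nonneg_pos) (metis less_irrefl)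

lemma scaleR_rw_laplacian: "(-t) *\<^sub>R rw_laplacian Om = t *\<^sub>R rw_transition Om - t *\<^sub>R mat 1"
  by (simp add: vec_eq_iff rw_laplacian_def rw_transition_def mat_def algebra_simps)

lemma rtrancl_rw_transition:
  assumes "\<forall>i. 0 < (\<Sum>j\<in>UNIV. Om $ i $ j)" and "strongly_connected_mat Om"
  shows "(i, j) \<in> {(a, b). 0 < rw_transition Om $ a $ b}\<^sup>*"
proof -
  have "{(a, b). 0 < Om $ a $ b} \<subseteq> {(a, b). 0 < rw_transition Om $ a $ b}"
    using assms(1) by (auto simp: rw_transition_def)
  then show ?thesis
    using assms(2) rtrancl_mono unfolding strongly_connected_mat_def by blast
qed

lemma abs_delta_sub_prob_le:
  fixes q :: "'a::finite \<Rightarrow> real"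
  assumes nonneg: "\<forall>l. 0 \<le> q l" and total: "sum q UNIV = 1" and "e \<le> q i"
  shows "\<bar>(if i = j then 1 else 0) - q j\<bar> \<le> 1 - e"
proof (cases "i = j")
  case True
  have "q i \<le> sum q UNIV"
    using nonneg by (intro member_le_sum) auto
  with True total assms(3) show ?thesis by simp
next
  case False
  have "sum q {i, j} \<le> sum q UNIV"
    using nonneg by (intro sum_mono2) auto
  with False total assms(3) nonneg show ?thesis by simp
qed

lemma one_minus_exp_neg_le_min: "0 \<le> (t::real) \<Longrightarrow> 1 - exp (-t) \<le> min 1 t"
  using exp_ge_add_one_self[of "-t"] by simp

lemma heat_kernel_entry:
  assumes "stochastic_mat P"
  shows "mexp (t *\<^sub>R P - t *\<^sub>R mat 1) $ i $ j = exp (-t) * mexp (t *\<^sub>R P) $ i $ j"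
  using mexp_add_scaleR_mat1_entry[OF assms, of t "-t" i j] by simp

lemma abs_mat1_sub_heat_kernel_le:
  assumes P: "stochastic_mat P" and t: "0 \<le> t"
  shows "\<bar>(mat 1 - mexp (t *\<^sub>R P - t *\<^sub>R mat 1)) $ i $ j\<bar> \<le> min 1 t"
proof -
  define q where "q l = exp (-t) * mexp (t *\<^sub>R P) $ i $ l" for l
  have "\<forall>l. 0 \<le> q l"
    using mexp_stochastic_nonneg[OF P t] by (simp add: q_def)
  moreover have "sum q UNIV = 1"
    using mexp_stochastic_row_sum[OF P] by (simp add: q_def sum_distrib_left[symmetric] exp_minus)
  moreover have "exp (-t) \<le> q i"
    using mexp_stochastic_ge_mat1[OF P t, of i i] by (simp add: q_def mat_1_entry)
  ultimately have "\<bar>(if i = j then 1 else 0) - q j\<bar> \<le> 1 - exp (-t)"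
    by (rule abs_delta_sub_prob_le)
  with one_minus_exp_neg_le_min[OF t]
  have "\<bar>(if i = j then 1 else 0) - q j\<bar> \<le> min 1 t"
    by linarith
  then show ?thesis
    by (simp only: q_def heat_kernel_entry[OF P] mat_1_entry vector_minus_component)
qed

lemma row_sum_mat1_sub_heat_kernel:
  assumes "stochastic_mat P"
  shows "(\<Sum>j\<in>UNIV. (mat 1 - mexp (t *\<^sub>R P - t *\<^sub>R mat 1)) $ i $ j) = 0"
  using mexp_stochastic_row_sum[OF assms, of t i]
  by (simp add: heat_kernel_entry[OF assms] mat_1_entry sum_subtractf
      sum_distrib_left[symmetric] exp_minus)

lemma mat1_sub_heat_kernel_neg:
  assumes P: "stochastic_mat P" and path: "(i, j) \<in> {(a, b). 0 < P $ a $ b}\<^sup>*"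
    and "i \<noteq> j" and "0 < t"
  shows "(mat 1 - mexp (t *\<^sub>R P - t *\<^sub>R mat 1)) $ i $ j < 0"
proof -
  obtain m where "0 < matpow P m $ i $ j"
    using matpow_pos_if_rtrancl[OF _ path] P by (auto simp: stochastic_mat_def)
  with \<open>0 < t\<close> have "0 < t ^ m * matpow P m $ i $ j / fact m"
    by simp
  also have "\<dots> \<le> mexp (t *\<^sub>R P) $ i $ j"
    using P \<open>0 < t\<close> by (intro mexp_stochastic_term_le) auto
  finally show ?thesis
    using \<open>i \<noteq> j\<close> by (simp add: heat_kernel_entry[OF P] mat_1_entry)
qed

lemma borel_measurable_mat1_sub_heat_kernel:
  assumes "stochastic_mat P"
  shows "(\<lambda>t. (mat 1 - mexp (t *\<^sub>R P - t *\<^sub>R mat 1)) $ i $ j) \<in> borel_measurable borel"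
  using borel_measurable_mexp_stochastic[OF assms, of i j]
  by (simp add: heat_kernel_entry[OF assms])

lemma integral_pos_AE:
  fixes f :: "'a \<Rightarrow> real"
  assumes f: "integrable M f" and pos: "AE x in M. 0 < f x" and "emeasure M (space M) \<noteq> 0"
  shows "0 < integral\<^sup>L M f"
proof -
  have nonneg: "AE x in M. 0 \<le> f x"
    using pos by eventually_elim simp
  have "integral\<^sup>L M f \<noteq> 0"
  proof
    assume "integral\<^sup>L M f = 0"
    then have "AE x in M. f x = 0"
      using integral_nonneg_eq_0_iff_AE[OF f nonneg] by simp
    with pos have "AE x in M. False"
      by eventually_elim simp
    then show False
      using \<open>emeasure M (space M) \<noteq> 0\<close> by (simp add: AE_iff_measurable[OF _ refl])
  qed
  then show ?thesis
    using integral_nonneg_AE[OF nonneg] by simp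
qed

lemma integrable_mat1_sub_heat_kernel:
  assumes P: "stochastic_mat P" and nu_borel: "sets nu = sets borel"
    and pos: "AE t in nu. 0 < t" and levy: "integrable nu (\<lambda>t. min 1 t)"
  shows "integrable nu (\<lambda>t. (mat 1 - mexp (t *\<^sub>R P - t *\<^sub>R mat 1)) $ i $ j)"
proof (rule Bochner_Integration.integrable_bound[OF levy])
  show "(\<lambda>t. (mat 1 - mexp (t *\<^sub>R P - t *\<^sub>R mat 1)) $ i $ j) \<in> borel_measurable nu"
    using borel_measurable_mat1_sub_heat_kernel[OF P] by (simp add: measurable_cong_sets[OF nu_borel refl])
  show "AE t in nu. norm ((mat 1 - mexp (t *\<^sub>R P - t *\<^sub>R mat 1)) $ i $ j) \<le> norm (min 1 t)"
    using pos by eventually_elim (use abs_mat1_sub_heat_kernel_le[OF P] in auto)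
qed

lemma integral_mat1_sub_heat_kernel_row_sum:
  assumes P: "stochastic_mat P" and "sets nu = sets borel"
    and "AE t in nu. 0 < t" and "integrable nu (\<lambda>t. min 1 t)"
  shows "(\<Sum>j\<in>UNIV. \<integral>t. (mat 1 - mexp (t *\<^sub>R P - t *\<^sub>R mat 1)) $ i $ j \<partial>nu) = 0"
proof -
  have "(\<Sum>j\<in>UNIV. \<integral>t. (mat 1 - mexp (t *\<^sub>R P - t *\<^sub>R mat 1)) $ i $ j \<partial>nu)
      = (\<integral>t. (\<Sum>j\<in>UNIV. (mat 1 - mexp (t *\<^sub>R P - t *\<^sub>R mat 1)) $ i $ j) \<partial>nu)"
    using integrable_mat1_sub_heat_kernel[OF assms] by (simp add: Bochner_Integration.integral_sum)
  also have "\<dots> = 0"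
    unfolding row_sum_mat1_sub_heat_kernel[OF P] by simp
  finally show ?thesis .
qed

lemma integral_mat1_sub_heat_kernel_neg:
  assumes P: "stochastic_mat P" and nu_borel: "sets nu = sets borel"
    and pos: "AE t in nu. 0 < t" and levy: "integrable nu (\<lambda>t. min 1 t)"
    and nonzero: "emeasure nu (space nu) \<noteq> 0"
    and path: "(i, j) \<in> {(a, b). 0 < P $ a $ b}\<^sup>*" and "i \<noteq> j"
  shows "(\<integral>t. (mat 1 - mexp (t *\<^sub>R P - t *\<^sub>R mat 1)) $ i $ j \<partial>nu) < 0"
proof -
  have "0 < (\<integral>t. - (mat 1 - mexp (t *\<^sub>R P - t *\<^sub>R mat 1)) $ i $ j \<partial>nu)"
  proof (rule integral_pos_AE[OF _ _ nonzero])
    show "integrable nu (\<lambda>t. - (mat 1 - mexp (t *\<^sub>R P - t *\<^sub>R mat 1)) $ i $ j)"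
      by (rule integrable_minus[OF integrable_mat1_sub_heat_kernel[OF P nu_borel pos levy]])
    show "AE t in nu. 0 < - (mat 1 - mexp (t *\<^sub>R P - t *\<^sub>R mat 1)) $ i $ j"
      using pos by eventually_elim (use mat1_sub_heat_kernel_neg[OF P path \<open>i \<noteq> j\<close>] in auto)
  qed
  then show ?thesis
    by (simp only: Bochner_Integration.integral_minus neg_0_less_iff_less)
qed

lemma diag_pos_if_row_sum_zero:
  fixes G :: "real^'n^'n"
  assumes "2 \<le> CARD('n)" and "(\<Sum>j\<in>UNIV. G $ i $ j) = 0" and "\<And>j. i \<noteq> j \<Longrightarrow> G $ i $ j < 0"
  shows "0 < G $ i $ i"
proof -
  have "UNIV \<noteq> {i}"
  proof
    assume "UNIV = {i}"
    then have "CARD('n) = card {i}" by (rule arg_cong)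
    then have "CARD('n) = 1" by simp
    with assms(1) show False by simp
  qed
  then have "0 < (\<Sum>j\<in>UNIV - {i}. - G $ i $ j)"
    using assms(3) by (intro sum_pos) auto
  moreover have "(\<Sum>j\<in>UNIV. G $ i $ j) = G $ i $ i + (\<Sum>j\<in>UNIV - {i}. G $ i $ j)"
    by (rule sum.remove) auto
  ultimately show ?thesis
    using assms(2) by (simp add: sum_negf)
qed

lemma stochastic_mat_off_diagonal_normalization:
  fixes G :: "real^'n^'n"
  assumes rows: "\<And>i. (\<Sum>j\<in>UNIV. G $ i $ j) = 0" and diag: "\<And>i. 0 < G $ i $ i"
    and off: "\<And>i j. i \<noteq> j \<Longrightarrow> G $ i $ j < 0"
  defines "W \<equiv> \<chi> i j. (if i = j then 1 else 0) - G $ i $ j / G $ i $ i"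
  shows "stochastic_mat W \<and> (\<forall>i. W $ i $ i = 0) \<and> (\<forall>i j. i \<noteq> j \<longrightarrow> 0 < W $ i $ j)"
proof -
  have nonzero: "G $ i $ i \<noteq> 0" for i
    using diag by (metis less_irrefl)
  have zero: "W $ i $ i = 0" for i
    using nonzero by (simp add: W_def)
  have off_pos: "0 < W $ i $ j" if "i \<noteq> j" for i j
    using off diag that by (simp add: W_def divide_neg_pos)
  have "0 \<le> W $ i $ j" for i j
    using zero off_pos by (cases "i = j") (auto intro: less_imp_le)
  moreover have "(\<Sum>j\<in>UNIV. W $ i $ j) = 1" for i
    using rows nonzero by (simp add: W_def sum_subtractf sum_divide_distrib[symmetric])
  ultimately show ?thesis
    using zero off_pos by (simp add: stochastic_mat_def)
qed

theorem mainTheorem3: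
  fixes Om :: "real^'n^'n" and nu :: "real measure"
  assumes N2: "CARD('n) \<ge> 2"
    and nonneg: "\<forall>i j. Om $ i $ j \<ge> 0"
    and zero_diag: "\<forall>i. Om $ i $ i = 0"
    and rowsum_pos: "\<forall>i. (\<Sum>j\<in>UNIV. Om $ i $ j) > 0"
    and sconn: "strongly_connected_mat Om"
    and nu_borel: "sets nu = sets borel"
    and nu_support: "emeasure nu {..0} = 0"
    and nu_nonzero: "emeasure nu (space nu) \<noteq> 0"
    and nu_levy: "integrable nu (\<lambda>\<tau>. min 1 \<tau>)"
  shows "(\<forall>i j. integrable nu (\<lambda>\<tau>. (mat 1 - mexp ((-\<tau>) *\<^sub>R rw_laplacian Om)) $ i $ j))
    \<and> (let G = (\<chi> i j. \<integral>\<tau>. (mat 1 - mexp ((-\<tau>) *\<^sub>R rw_laplacian Om)) $ i $ j \<partial>nu);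
           W = (\<chi> i j. (if i = j then 1 else 0) - G $ i $ j / G $ i $ i)
       in (\<forall>i. (\<Sum>j\<in>UNIV. G $ i $ j) = 0)
        \<and> (\<forall>i. G $ i $ i > 0)
        \<and> (\<forall>i j. i \<noteq> j \<longrightarrow> G $ i $ j < 0)
        \<and> (\<forall>i j. W $ i $ j \<ge> 0)
        \<and> (\<forall>i. (\<Sum>j\<in>UNIV. W $ i $ j) = 1)
        \<and> (\<forall>i. W $ i $ i = 0)
        \<and> (\<forall>i j. i \<noteq> j \<longrightarrow> W $ i $ j > 0))"
proof -
  let ?P = "rw_transition Om"
  have P: "stochastic_mat ?P"
    using nonneg rowsum_pos by (rule stochastic_rw_transition)
  have path: "(i, j) \<in> {(a, b). 0 < ?P $ a $ b}\<^sup>*" for i j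
    using rowsum_pos sconn by (rule rtrancl_rw_transition)
  have pos: "AE t in nu. 0 < t"
    by (rule AE_I'[of "{..0}"]) (auto simp: null_sets_def nu_borel nu_support)
  note nu = nu_borel pos nu_levy
  define G where "G = (\<chi> i j. \<integral>\<tau>. (mat 1 - mexp (\<tau> *\<^sub>R ?P - \<tau> *\<^sub>R mat 1)) $ i $ j \<partial>nu)"
  have G: "G $ i $ j = (\<integral>\<tau>. (mat 1 - mexp (\<tau> *\<^sub>R ?P - \<tau> *\<^sub>R mat 1)) $ i $ j \<partial>nu)" for i j
    unfolding G_def by (simp only: vec_lambda_beta)
  have rows: "(\<Sum>j\<in>UNIV. G $ i $ j) = 0" for i
    unfolding G by (rule integral_mat1_sub_heat_kernel_row_sum[OF P nu])
  have off: "\<And>i j. i \<noteq> j \<Longrightarrow> G $ i $ j < 0"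
    unfolding G by (rule integral_mat1_sub_heat_kernel_neg[OF P nu nu_nonzero path])
  have diag: "0 < G $ i $ i" for i
    using N2 rows off by (rule diag_pos_if_row_sum_zero)
  let ?W = "\<chi> i j. (if i = j then 1 else 0) - G $ i $ j / G $ i $ i"
  have W: "stochastic_mat ?W \<and> (\<forall>i. ?W $ i $ i = 0) \<and> (\<forall>i j. i \<noteq> j \<longrightarrow> 0 < ?W $ i $ j)"
    using rows diag off by (rule stochastic_mat_off_diagonal_normalization)
  show ?thesis
    unfolding scaleR_rw_laplacian Let_def G_def[symmetric]
    using integrable_mat1_sub_heat_kernel[OF P nu] rows diag off W
    unfolding stochastic_mat_def by (intro conjI) blast+
qed

end
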